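(* Let a pebble placement strategy $\Lambda$ be fixed: for every instance (a connected simple undirected anonymous graph $G$ with port numbers, a source node $s$ and a treasure node $t$), $\Lambda$ places classical pebbles on some set of nodes of $G$. Then there is no deterministic treasure hunt algorithm for an oblivious agent that, for every instance, brings the agent from $s$ to the treasure $t$ when pebbles are placed according to $\Lambda$. That is, for every deterministic oblivious agent algorithm there is an instance on which the agent never reaches the treasure.
   Context: An anonymous graph is a connected simple undirected graph whose nodes are unlabelled and indistinguishable; at each node $v$ the incident edges carry distinct local labels (port numbers) from $\{0,\dots,\deg(v)-1\}$, so each edge has two independent port numbers, one at each endpoint. An agent starts at a source node $s$ and must reach a stationary target node $t$ (the treasure). The agent acts in rounds; in each round it "looks" (learns the degree of its current node and whether a pebble is present there), computes, and then either moves along one chosen port or stays. A pebble is a permanent classical marker placed on a node by an oracle (the pebble placement strategy) before the search, with knowledge of the whole instance. The agent is oblivious: it remembers nothing from previous rounds, so in a deterministic algorithm its action in a round is a function only of the degree of the current node and whether the current node carries a pebble. *)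

theory Defs
  imports Main
begin

text \<open>Nodes are represented by natural numbers
(the names are invisible to the agent). V is the node set, deg v the degree of v,
and nbr v p the neighbour reached from v via port p (for p < deg v).\<close>

definition port_graph :: "nat set \<Rightarrow> (nat \<Rightarrow> nat) \<Rightarrow> (nat \<Rightarrow> nat \<Rightarrow> nat) \<Rightarrow> bool" where
  "port_graph V deg nbr \<longleftrightarrow>
     finite V \<and> V \<noteq> {} \<and>
     (\<forall>v\<in>V. \<forall>p<deg v. nbr v p \<in> V \<and> nbr v p \<noteq> v) \<and>
     (\<forall>v\<in>V. inj_on (nbr v) {..<deg v}) \<and>
     (\<forall>v\<in>V. \<forall>p<deg v. \<exists>q<deg (nbr v p). nbr (nbr v p) q = v) \<and>
     (\<forall>u\<in>V. \<forall>w\<in>V. (u, w) \<in> {(x, y). x \<in> V \<and> (\<exists>p<deg x. nbr x p = y)}\<^sup>*)"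

text \<open>An instance: graph, source s, treasure t.\<close>
type_synonym hunt_instance = "nat set \<times> (nat \<Rightarrow> nat) \<times> (nat \<Rightarrow> nat \<Rightarrow> nat) \<times> nat \<times> nat"

datatype action = Stay | Move nat

text \<open>A deterministic oblivious agent: its action depends only on the degree of
the current node and whether it carries a pebble.\<close>
type_synonym agent = "nat \<Rightarrow> bool \<Rightarrow> action"

type_synonym strategy = "hunt_instance \<Rightarrow> nat set"

text \<open>One round. Moving along a non-existent port (p \<ge> deg v) leaves the agent in place.\<close>
definition step :: "agent \<Rightarrow> nat set \<Rightarrow> (nat \<Rightarrow> nat) \<Rightarrow> (nat \<Rightarrow> nat \<Rightarrow> nat) \<Rightarrow> nat \<Rightarrow> nat" where
  "step A P deg nbr v =
     (case A (deg v) (v \<in> P) of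
        Stay \<Rightarrow> v
      | Move p \<Rightarrow> (if p < deg v then nbr v p else v))"

definition pos :: "agent \<Rightarrow> nat set \<Rightarrow> (nat \<Rightarrow> nat) \<Rightarrow> (nat \<Rightarrow> nat \<Rightarrow> nat) \<Rightarrow> nat \<Rightarrow> nat \<Rightarrow> nat" where
  "pos A P deg nbr s k = (step A P deg nbr ^^ k) s"

end

theory Submission
  imports Defs
begin

text \<open>An oblivious agent sees only the degree and one pebble bit, so at nodes of degree 3 it
uses at most two of the three ports. Take the complete graph on four nodes, all of degree 3, with
the treasure at node 3, and label the ports so that the unused port r is exactly the one leading
to the treasure from each of the nodes 0, 1, 2. Whatever the pebbles, an agent starting at node 0
then never leaves the triangle 0, 1, 2.\<close>

lemma oblivious_agent_unused_port:
  fixes A :: agent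
  assumes "3 \<le> d"
  shows "\<exists>r<d. \<forall>b. A d b \<noteq> Move r"
proof -
  have "\<exists>r\<in>{0, 1, 2}. A d False \<noteq> Move r \<and> A d True \<noteq> Move r"
    by (cases "A d False"; cases "A d True") auto
  then obtain r where "r \<in> {0, 1, 2}" "A d False \<noteq> Move r" "A d True \<noteq> Move r"
    by blast
  moreover from this(1) assms have "r < d"
    by auto
  ultimately show ?thesis
    by (metis (full_types))
qed

lemma pos_in_step_closed_set:
  assumes "s \<in> S" and "\<And>v. v \<in> S \<Longrightarrow> step A P deg nbr v \<in> S"
  shows "pos A P deg nbr s k \<in> S"
  unfolding pos_def using assms by (induction k) auto

lemma reachable_if_pairwise_adjacent:
  assumes "\<forall>u\<in>V. \<forall>w\<in>V. u \<noteq> w \<longrightarrow> (\<exists>p<deg u. nbr u p = w)"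
  shows "\<forall>u\<in>V. \<forall>w\<in>V. (u, w) \<in> {(x, y). x \<in> V \<and> (\<exists>p<deg x. nbr x p = y)}\<^sup>*"
  using assms by (metis (mono_tags, lifting) case_prodI mem_Collect_eq r_into_rtrancl rtrancl.rtrancl_refl)

text \<open>For v < 3 the two ports other than r lead to the two other nodes below 3, since
p + 3 - r is then 1 or 2 modulo 3.\<close>

definition trap_port :: "nat \<Rightarrow> nat \<Rightarrow> nat \<Rightarrow> nat" where
  "trap_port r v p = (if v = 3 then p else if p = r then 3 else (v + p + 3 - r) mod 3)"

lemma port_graph_trap:
  assumes "r < 3"
  shows "port_graph {0, 1, 2, 3} (\<lambda>_. 3) (trap_port r)"
proof -
  have nodes: "(\<forall>v\<in>{0::nat, 1, 2, 3}. Q v) \<longleftrightarrow> Q 0 \<and> Q 1 \<and> Q 2 \<and> Q 3" for Q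
    by simp
  have all_ports: "(\<forall>p<3. Q p) \<longleftrightarrow> Q 0 \<and> Q 1 \<and> Q (2::nat)" for Q
    by (auto simp: less_Suc_eq numeral_eq_Suc)
  have ex_port: "(\<exists>p<3. Q p) \<longleftrightarrow> Q 0 \<or> Q 1 \<or> Q (2::nat)" for Q
    by (auto simp: less_Suc_eq numeral_eq_Suc)
  have inj_ports: "inj_on f {..<3} \<longleftrightarrow> f 0 \<noteq> f 1 \<and> f 0 \<noteq> f 2 \<and> f 1 \<noteq> f (2::nat)" for f :: "nat \<Rightarrow> nat"
    by (auto simp: inj_on_def less_Suc_eq numeral_eq_Suc)
  have "r = 0 \<or> r = 1 \<or> r = 2"
    using assms by auto
  then have ports: "\<forall>v\<in>{0::nat, 1, 2, 3}. \<forall>p<3. trap_port r v p \<in> {0, 1, 2, 3} \<and> trap_port r v p \<noteq> v"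
    and injective: "\<forall>v\<in>{0::nat, 1, 2, 3}. inj_on (trap_port r v) {..<3}"
    and reverse: "\<forall>v\<in>{0::nat, 1, 2, 3}. \<forall>p<3. \<exists>q<3. trap_port r (trap_port r v p) q = v"
    and adjacent: "\<forall>u\<in>{0::nat, 1, 2, 3}. \<forall>w\<in>{0, 1, 2, 3}. u \<noteq> w \<longrightarrow> (\<exists>p<3. trap_port r u p = w)"
    unfolding nodes all_ports ex_port inj_ports by (elim disjE; simp add: trap_port_def)+
  moreover have "finite {0::nat, 1, 2, 3}" and "{0::nat, 1, 2, 3} \<noteq> {}"
    by simp_all
  ultimately show ?thesis
    unfolding port_graph_def
    using reachable_if_pairwise_adjacent[where deg = "\<lambda>_. 3", OF adjacent] by blast
qed

lemma step_trap_stays_in_triangle: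
  assumes "\<forall>b. A 3 b \<noteq> Move r" and "v < 3"
  shows "step A P (\<lambda>_. 3) (trap_port r) v < 3"
  using assms by (cases "A 3 (v \<in> P)") (auto simp: step_def trap_port_def)

theorem theorem1:
  fixes \<Lambda> :: strategy and A :: agent
  shows "\<exists>V deg nbr s t. port_graph V deg nbr \<and> s \<in> V \<and> t \<in> V \<and>
           (\<forall>k. pos A (\<Lambda> (V, deg, nbr, s, t)) deg nbr s k \<noteq> t)"
proof -
  obtain r where "r < 3" and unused: "\<forall>b. A 3 b \<noteq> Move r"
    using oblivious_agent_unused_port by blast
  let ?P = "\<Lambda> ({0, 1, 2, 3}, \<lambda>_. 3, trap_port r, 0, 3)"
  have "pos A ?P (\<lambda>_. 3) (trap_port r) 0 k \<in> {..<3}" for k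
    using step_trap_stays_in_triangle[where A = A and r = r, OF unused]
    by (intro pos_in_step_closed_set) auto
  then have "\<forall>k. pos A ?P (\<lambda>_. 3) (trap_port r) 0 k \<noteq> 3"
    by (metis lessThan_iff less_irrefl)
  with port_graph_trap[OF \<open>r < 3\<close>] show ?thesis
    by blast
qed

end
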